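(* Under Rayleigh fading ($m_{\rm rd}=m_{\rm sd}=1$), for every $r>0$, $P_{\rm r}>0$ and $\mathcal C_x\in[0,1)$, \[ \mathcal P_{\rm rd}(P_{\rm r},\mathcal C_x)=1-\frac{\exp\!\left(-\frac{\Psi_r(\mathcal C_x)}{P_{\rm r}\pi_{\rm rd}(1-\mathcal C_x^2)}\right)}{P_{\rm s}\pi_{\rm sd}\frac{\Psi_r(\mathcal C_x)}{P_{\rm r}\pi_{\rm rd}(1-\mathcal C_x^2)}+1}. \] In particular, for $\mathcal C_x=0$ this equals $1-\frac{P_{\rm r}\pi_{\rm rd}e^{-\eta/(P_{\rm r}\pi_{\rm rd})}}{P_{\rm r}\pi_{\rm rd}+P_{\rm s}\pi_{\rm sd}\eta}$, and as $\mathcal C_x\to1$ it tends to $1-\frac{e^{-\gamma/(2P_{\rm r}\pi_{\rm rd})}}{\frac{\gamma P_{\rm s}\pi_{\rm sd}}{2P_{\rm r}\pi_{\rm rd}}+1}$.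
   Context: Let $P_{\rm s}>0$, $P_{\rm r}>0$. Rayleigh fading: $g_{\rm rd},g_{\rm sd}$ are independent exponential random variables with means $\pi_{\rm rd},\pi_{\rm sd}>0$. For $\mathcal C_x\in[0,1)$ define $R_{\rm rd}(P_{\rm r},\mathcal C_x)=\tfrac12\log_2\frac{(P_{\rm r}g_{\rm rd}+P_{\rm s}g_{\rm sd}+1)^2-(P_{\rm r}g_{\rm rd}\mathcal C_x)^2}{(P_{\rm s}g_{\rm sd}+1)^2}$. For a target rate $r>0$ put $\gamma=2^{2r}-1$, $\eta=2^r-1$ and $\Psi_r(x)=\sqrt{1+\gamma(1-x^2)}-1$. The R–D outage probability is $\mathcal P_{\rm rd}=\mathbb P\{R_{\rm rd}<r\}$. *)

theory Defs
  imports "HOL-Probability.Probability"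
begin

definition R_rd :: "real \<Rightarrow> real \<Rightarrow> real \<Rightarrow> real \<Rightarrow> real \<Rightarrow> real" where
  "R_rd Ps Pr Cx grd gsd =
     1/2 * log 2 (((Pr * grd + Ps * gsd + 1)^2 - (Pr * grd * Cx)^2) / (Ps * gsd + 1)^2)"

definition gam :: "real \<Rightarrow> real" where "gam r = 2 powr (2 * r) - 1"
definition eta :: "real \<Rightarrow> real" where "eta r = 2 powr r - 1"
definition Psi :: "real \<Rightarrow> real \<Rightarrow> real" where
  "Psi r x = sqrt (1 + gam r * (1 - x^2)) - 1"

definition P_rd :: "'a measure \<Rightarrow> ('a \<Rightarrow> real) \<Rightarrow> ('a \<Rightarrow> real) \<Rightarrow> real \<Rightarrow> real \<Rightarrow> real \<Rightarrow> real \<Rightarrow> real" where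
  "P_rd M grd gsd Ps Pr Cx r = measure M {\<omega> \<in> space M. R_rd Ps Pr Cx (grd \<omega>) (gsd \<omega>) < r}"

end

theory Submission
  imports Defs
begin

text \<open>
  For \<open>r > 0\<close> and \<open>0 \<le> C\<^sub>x < 1\<close>, the event \<open>R\<^sub>r\<^sub>d < r\<close> is a quadratic inequality in \<open>P\<^sub>r g\<^sub>r\<^sub>d\<close>
  whose positive root is linear in \<open>P\<^sub>s g\<^sub>s\<^sub>d + 1\<close>; so the outage event is \<open>g\<^sub>r\<^sub>d < c (P\<^sub>s g\<^sub>s\<^sub>d + 1)\<close>
  with \<open>c = \<Psi>\<^sub>r(C\<^sub>x) / (P\<^sub>r (1 - C\<^sub>x\<^sup>2))\<close>. For independent exponential gains this probability is
  an elementary integral: conditioning on \<open>g\<^sub>s\<^sub>d = y\<close> gives the exponential CDF at \<open>c (P\<^sub>s y + 1)\<close>, and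
  integrating against the density of \<open>g\<^sub>s\<^sub>d\<close> produces a second exponential density with the
  larger rate \<open>1/\<pi>\<^sub>s\<^sub>d + c P\<^sub>s/\<pi>\<^sub>r\<^sub>d\<close>. The two special cases follow from \<open>\<Psi>\<^sub>r(0) = \<eta>\<close> and from
  rationalising \<open>\<Psi>\<^sub>r(x)/(1 - x\<^sup>2) = \<gamma> / (\<surd>(1 + \<gamma>(1 - x\<^sup>2)) + 1)\<close>, which is continuous at \<open>x = 1\<close>.
\<close>

lemma nn_integral_exponential_density:
  "0 < l \<Longrightarrow> (\<integral>\<^sup>+ x. ennreal (exponential_density l x) \<partial>lborel) = 1"
  using nn_integral_erlang_ith_moment[of l 0 0] by simp

lemma (in prob_space) emeasure_exponential_less_indep:
  fixes X Y :: "'a \<Rightarrow> real" and \<phi> :: "real \<Rightarrow> real"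
  assumes "0 < l"
    and X: "distributed M lborel X (\<lambda>x. ennreal (exponential_density l x))"
    and Y: "distributed M lborel Y g"
    and indep: "indep_var borel X borel Y"
    and [measurable]: "\<phi> \<in> borel_measurable borel"
  shows "emeasure M {\<omega>\<in>space M. X \<omega> < \<phi> (Y \<omega>)}
    = (\<integral>\<^sup>+ y. g y * ennreal (erlang_CDF 0 l (\<phi> y)) \<partial>lborel)"
proof -
  have "indep_var lborel X lborel Y" using indep by (simp add: indep_var_eq)
  then have XY: "distributed M (lborel \<Otimes>\<^sub>M lborel) (\<lambda>\<omega>. (X \<omega>, Y \<omega>))
      (\<lambda>(x, y). ennreal (exponential_density l x) * g y)"
    by (rule distributed_joint_indep[OF sigma_finite_lborel sigma_finite_lborel X Y])
  have [measurable]: "g \<in> borel_measurable lborel" using distributed_borel_measurable[OF Y] .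
  define B where "B = {p \<in> space (lborel \<Otimes>\<^sub>M lborel). fst p < \<phi> (snd p)}"
  have [measurable]: "B \<in> sets (lborel \<Otimes>\<^sub>M lborel)" unfolding B_def by measurable
  have "emeasure M {\<omega>\<in>space M. X \<omega> < \<phi> (Y \<omega>)} = emeasure M ((\<lambda>\<omega>. (X \<omega>, Y \<omega>)) -` B \<inter> space M)"
    by (rule arg_cong[where f = "emeasure M"]) (auto simp: B_def space_pair_measure)
  also have "\<dots> = (\<integral>\<^sup>+ p. (\<lambda>(x, y). ennreal (exponential_density l x) * g y) p * indicator B p
      \<partial>(lborel \<Otimes>\<^sub>M lborel))"
    by (rule distributed_emeasure[OF XY]) measurable
  also have "\<dots> = (\<integral>\<^sup>+ y. \<integral>\<^sup>+ x. ennreal (exponential_density l x) * g y * indicator B (x, y) \<partial>lborel \<partial>lborel)"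
    by (subst lborel_pair.nn_integral_snd[symmetric]) (auto intro: nn_integral_cong)
  also have "\<dots> = (\<integral>\<^sup>+ y. g y * ennreal (erlang_CDF 0 l (\<phi> y)) \<partial>lborel)"
  proof (rule nn_integral_cong)
    fix y
    have "(\<integral>\<^sup>+ x. ennreal (exponential_density l x) * g y * indicator B (x, y) \<partial>lborel)
        = (\<integral>\<^sup>+ x. g y * (ennreal (exponential_density l x) * indicator {..\<phi> y} x) \<partial>lborel)"
      using AE_lborel_singleton[of "\<phi> y"]
      by (intro nn_integral_cong_AE, eventually_elim)
         (auto simp: B_def space_pair_measure mult.commute split: split_indicator)
    also have "\<dots> = g y * ennreal (erlang_CDF 0 l (\<phi> y))"
      by (simp add: nn_integral_cmult nn_integral_erlang_density[OF \<open>0 < l\<close>])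
    finally show "(\<integral>\<^sup>+ x. ennreal (exponential_density l x) * g y * indicator B (x, y) \<partial>lborel)
        = g y * ennreal (erlang_CDF 0 l (\<phi> y))" .
  qed
  finally show ?thesis .
qed

lemma (in prob_space) exponential_distributed_AE_nonneg:
  "distributed M lborel X (\<lambda>x. ennreal (exponential_density l x)) \<Longrightarrow> AE \<omega> in M. 0 \<le> X \<omega>"
  by (subst distributed_AE2) (auto simp: exponential_density_def)

lemma exponential_density_split_erlang_CDF_affine:
  fixes l1 l2 a b y :: real
  assumes "0 < l1" "0 < l2" "0 \<le> a" "0 \<le> b"
  shows "exponential_density l2 y
    = exponential_density l2 y * erlang_CDF 0 l1 (a * y + b)
      + exp (- l1 * b) * l2 / (l2 + l1 * a) * exponential_density (l2 + l1 * a) y"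
proof (cases "y < 0")
  case False
  have "exp (- (y * (l2 + l1 * a))) = exp (- (y * l2)) * exp (- (l1 * a * y))"
    by (simp add: exp_add[symmetric] algebra_simps)
  moreover have "exp (- l1 * (a * y + b)) = exp (- (l1 * b)) * exp (- (l1 * a * y))"
    by (simp add: exp_add[symmetric] algebra_simps)
  moreover have "0 < l2 + l1 * a" using assms by (simp add: add_pos_nonneg)
  ultimately show ?thesis
    using False assms by (simp add: exponential_density_def erlang_CDF_0 field_simps)
qed (simp add: exponential_density_def)

lemma nn_integral_exponential_density_erlang_CDF_affine:
  fixes l1 l2 a b :: real
  assumes "0 < l1" "0 < l2" "0 \<le> a" "0 \<le> b"
  shows "(\<integral>\<^sup>+ y. ennreal (exponential_density l2 y) * ennreal (erlang_CDF 0 l1 (a * y + b)) \<partial>lborel)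
    = ennreal (1 - exp (- l1 * b) * l2 / (l2 + l1 * a))"
proof -
  define L where "L = l2 + l1 * a"
  define K where "K = exp (- l1 * b) * l2 / L"
  have "0 < L" using assms by (simp add: L_def add_pos_nonneg)
  have "exp (- l1 * b) * l2 \<le> 1 * L"
    by (rule mult_mono) (use assms in \<open>auto simp: L_def\<close>)
  then have "0 \<le> K" "K \<le> 1"
    using assms \<open>0 < L\<close> by (auto simp: K_def)
  have density_split: "ennreal (exponential_density l2 y)
      = ennreal (exponential_density l2 y) * ennreal (erlang_CDF 0 l1 (a * y + b))
        + ennreal K * ennreal (exponential_density L y)" for y
  proof -
    have "0 \<le> exponential_density l2 y * erlang_CDF 0 l1 (a * y + b)"
      using assms by (simp add: exponential_density_nonneg)
    moreover have "0 \<le> K * exponential_density L y"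
      using \<open>0 \<le> K\<close> \<open>0 < L\<close> by (simp add: exponential_density_nonneg)
    ultimately show ?thesis
      using exponential_density_split_erlang_CDF_affine[OF assms, of y] \<open>0 \<le> K\<close> assms
      by (simp add: K_def L_def ennreal_mult'[symmetric] flip: ennreal_plus)
  qed
  have "1 = (\<integral>\<^sup>+ y. ennreal (exponential_density l2 y) \<partial>lborel)"
    using nn_integral_exponential_density[OF \<open>0 < l2\<close>] by simp
  also have "\<dots> = (\<integral>\<^sup>+ y. ennreal (exponential_density l2 y) * ennreal (erlang_CDF 0 l1 (a * y + b))
      + ennreal K * ennreal (exponential_density L y) \<partial>lborel)"
    by (rule nn_integral_cong) (rule density_split)
  also have "\<dots> = (\<integral>\<^sup>+ y. ennreal (exponential_density l2 y) * ennreal (erlang_CDF 0 l1 (a * y + b)) \<partial>lborel)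
      + ennreal K"
    by (subst nn_integral_add)
       (auto simp: erlang_CDF_0 nn_integral_cmult nn_integral_exponential_density[OF \<open>0 < L\<close>])
  finally have "1 - ennreal K = (\<integral>\<^sup>+ y. ennreal (exponential_density l2 y) * ennreal (erlang_CDF 0 l1 (a * y + b)) \<partial>lborel)"
    by (metis ennreal_add_diff_cancel_right ennreal_neq_top)
  then show ?thesis
    using ennreal_minus[OF \<open>0 \<le> K\<close>, of 1] by (simp add: K_def L_def)
qed

lemma (in prob_space) prob_exponential_less_affine_exponential:
  fixes X Y :: "'a \<Rightarrow> real"
  assumes "0 < l1" "0 < l2" "0 \<le> a" "0 \<le> b"
    and X: "distributed M lborel X (\<lambda>x. ennreal (exponential_density l1 x))"
    and Y: "distributed M lborel Y (\<lambda>y. ennreal (exponential_density l2 y))"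
    and "indep_var borel X borel Y"
  shows "measure M {\<omega>\<in>space M. X \<omega> < a * Y \<omega> + b} = 1 - exp (- l1 * b) * l2 / (l2 + l1 * a)"
proof -
  have "emeasure M {\<omega>\<in>space M. X \<omega> < a * Y \<omega> + b} = ennreal (1 - exp (- l1 * b) * l2 / (l2 + l1 * a))"
    using emeasure_exponential_less_indep[OF assms(1) X Y assms(7), of "\<lambda>y. a * y + b"]
      nn_integral_exponential_density_erlang_CDF_affine[OF assms(1-4)]
    by simp
  moreover have "0 \<le> 1 - exp (- l1 * b) * l2 / (l2 + l1 * a)"
  proof -
    have "exp (- l1 * b) * l2 \<le> 1 * (l2 + l1 * a)"
      by (rule mult_mono) (use assms in auto)
    then show ?thesis using assms by (simp add: add_pos_nonneg)
  qed
  ultimately show ?thesis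
    by (simp add: measure_def)
qed

lemma gam_pos: "0 < r \<Longrightarrow> 0 < gam r"
  by (simp add: gam_def)

lemma eta_nonneg: "0 \<le> r \<Longrightarrow> 0 \<le> eta r"
  by (simp add: eta_def ge_one_powr_ge_zero)

lemma Psi_0: "Psi r 0 = eta r"
proof -
  have "2 powr (2 * r) = (2 powr r)\<^sup>2"
    by (simp add: power2_eq_square powr_add[symmetric])
  then show ?thesis by (simp add: Psi_def gam_def eta_def)
qed

lemma less_below_positive_root_iff:
  fixes A u D g :: real
  assumes "0 \<le> A" "0 < u" "0 < D" "0 < g"
  shows "D * A\<^sup>2 + 2 * A * u - g * u\<^sup>2 < 0 \<longleftrightarrow> A < u * (sqrt (1 + g * D) - 1) / D"
proof -
  define S where "S = sqrt (1 + g * D)"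
  have "S\<^sup>2 = 1 + g * D" "1 < S"
    using assms by (simp_all add: S_def)
  have "(D * A - u * (S - 1)) * (D * A + u * (S + 1)) = D * (D * A\<^sup>2 + 2 * A * u) - u\<^sup>2 * (S\<^sup>2 - 1)"
    by (simp add: algebra_simps power2_eq_square)
  also have "\<dots> = D * (D * A\<^sup>2 + 2 * A * u - g * u\<^sup>2)"
    using \<open>S\<^sup>2 = 1 + g * D\<close> by (simp add: algebra_simps)
  finally have factor: "D * A\<^sup>2 + 2 * A * u - g * u\<^sup>2 = (D * A - u * (S - 1)) * (D * A + u * (S + 1)) / D"
    using \<open>0 < D\<close> by simp
  have "0 < D * A + u * (S + 1)"
    using assms \<open>1 < S\<close> by (simp add: add_nonneg_pos)
  then have "D * A\<^sup>2 + 2 * A * u - g * u\<^sup>2 < 0 \<longleftrightarrow> D * A - u * (S - 1) < 0"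
    unfolding factor using \<open>0 < D\<close> by (simp add: divide_less_0_iff mult_less_0_iff)
  also have "\<dots> \<longleftrightarrow> A < u * (S - 1) / D"
    using \<open>0 < D\<close> by (simp add: field_simps)
  finally show ?thesis by (simp add: S_def)
qed

lemma Psi_nonneg: "0 < r \<Longrightarrow> 0 \<le> Cx \<Longrightarrow> Cx < 1 \<Longrightarrow> 0 \<le> Psi r Cx"
  using gam_pos[of r] by (simp add: Psi_def power_le_one)

lemma Psi_div_eq:
  assumes "0 < r" "0 \<le> Cx" "Cx < 1"
  shows "Psi r Cx / (1 - Cx\<^sup>2) = gam r / (sqrt (1 + gam r * (1 - Cx\<^sup>2)) + 1)"
proof -
  define S where "S = sqrt (1 + gam r * (1 - Cx\<^sup>2))"
  have "0 < 1 - Cx\<^sup>2"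
    using assms by (simp add: power_less_one_iff abs_square_less_1)
  then have "S\<^sup>2 = 1 + gam r * (1 - Cx\<^sup>2)" "0 \<le> S"
    using gam_pos[OF \<open>0 < r\<close>] by (simp_all add: S_def)
  then have "(S - 1) * (S + 1) = gam r * (1 - Cx\<^sup>2)"
    by (simp add: power2_eq_square algebra_simps)
  then show ?thesis
    using \<open>0 < 1 - Cx\<^sup>2\<close> \<open>0 \<le> S\<close> unfolding Psi_def S_def[symmetric] by (simp add: field_simps)
qed

definition outage_threshold :: "real \<Rightarrow> real \<Rightarrow> real \<Rightarrow> real" where
  "outage_threshold r Pr Cx = Psi r Cx / (Pr * (1 - Cx\<^sup>2))"

lemma outage_threshold_nonneg:
  "0 < r \<Longrightarrow> 0 < Pr \<Longrightarrow> 0 \<le> Cx \<Longrightarrow> Cx < 1 \<Longrightarrow> 0 \<le> outage_threshold r Pr Cx"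
  using Psi_nonneg[of r Cx] by (simp add: outage_threshold_def power_le_one)

lemma R_rd_less_iff:
  fixes r Ps Pr Cx x y :: real
  assumes "0 < r" "0 < Ps" "0 < Pr" "0 \<le> Cx" "Cx < 1" "0 \<le> x" "0 \<le> y"
  shows "R_rd Ps Pr Cx x y < r \<longleftrightarrow> x < outage_threshold r Pr Cx * (Ps * y + 1)"
proof -
  define A where "A = Pr * x"
  define u where "u = Ps * y + 1"
  define D where "D = 1 - Cx\<^sup>2"
  have "0 \<le> A" "0 < u"
    using assms by (simp_all add: A_def u_def add_nonneg_pos)
  have "0 < D"
    using assms by (simp add: D_def power_less_one_iff abs_square_less_1)
  have "(A * Cx)\<^sup>2 \<le> A\<^sup>2"
    using \<open>0 < D\<close> \<open>0 \<le> A\<close> by (simp add: D_def power_mult_distrib mult_left_le)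
  moreover have "(A + u)\<^sup>2 - A\<^sup>2 = u * (2 * A + u)"
    by (simp add: power2_eq_square algebra_simps)
  moreover have "0 < u * (2 * A + u)"
    using \<open>0 \<le> A\<close> \<open>0 < u\<close> by (simp add: add_nonneg_pos)
  ultimately have ratio_pos: "0 < ((A + u)\<^sup>2 - (A * Cx)\<^sup>2) / u\<^sup>2"
    using \<open>0 < u\<close> by simp
  have "R_rd Ps Pr Cx x y < r \<longleftrightarrow> log 2 (((A + u)\<^sup>2 - (A * Cx)\<^sup>2) / u\<^sup>2) < 2 * r"
    unfolding R_rd_def by (simp add: A_def u_def add.assoc mult.commute)
  also have "\<dots> \<longleftrightarrow> ((A + u)\<^sup>2 - (A * Cx)\<^sup>2) / u\<^sup>2 < 2 powr (2 * r)"
    using ratio_pos by (simp add: log_less_iff)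
  also have "\<dots> \<longleftrightarrow> (A + u)\<^sup>2 - (A * Cx)\<^sup>2 < (gam r + 1) * u\<^sup>2"
    using \<open>0 < u\<close> by (simp add: pos_divide_less_eq gam_def)
  also have "\<dots> \<longleftrightarrow> D * A\<^sup>2 + 2 * A * u - gam r * u\<^sup>2 < 0"
    by (simp add: D_def power2_eq_square algebra_simps)
  also have "\<dots> \<longleftrightarrow> A < u * (sqrt (1 + gam r * D) - 1) / D"
    by (rule less_below_positive_root_iff[OF \<open>0 \<le> A\<close> \<open>0 < u\<close> \<open>0 < D\<close> gam_pos[OF \<open>0 < r\<close>]])
  also have "\<dots> \<longleftrightarrow> x < outage_threshold r Pr Cx * (Ps * y + 1)"
    using \<open>0 < Pr\<close> \<open>0 < D\<close> by (simp add: A_def u_def D_def outage_threshold_def Psi_def field_simps)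
  finally show ?thesis .
qed

locale rayleigh_fading = prob_space M
  for M :: "'a measure" +
  fixes grd gsd :: "'a \<Rightarrow> real" and Ps pi_rd pi_sd :: real
  assumes Ps_pos: "0 < Ps" and pi_rd_pos: "0 < pi_rd" and pi_sd_pos: "0 < pi_sd"
    and grd_exponential: "distributed M lborel grd (\<lambda>x. ennreal (exponential_density (1 / pi_rd) x))"
    and gsd_exponential: "distributed M lborel gsd (\<lambda>x. ennreal (exponential_density (1 / pi_sd) x))"
    and indep: "indep_var borel grd borel gsd"
begin

lemma P_rd_eq_prob_less_affine:
  assumes "0 < r" "0 < Pr" "0 \<le> Cx" "Cx < 1"
  defines "c \<equiv> outage_threshold r Pr Cx"
  shows "P_rd M grd gsd Ps Pr Cx r = measure M {\<omega>\<in>space M. grd \<omega> < (c * Ps) * gsd \<omega> + c}"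
  unfolding P_rd_def
proof (rule measure_eq_AE)
  have [measurable]: "grd \<in> borel_measurable M" "gsd \<in> borel_measurable M"
    using distributed_measurable[OF grd_exponential] distributed_measurable[OF gsd_exponential] by simp_all
  from exponential_distributed_AE_nonneg[OF grd_exponential] exponential_distributed_AE_nonneg[OF gsd_exponential]
  show "AE \<omega> in M. (\<omega> \<in> {\<omega>\<in>space M. R_rd Ps Pr Cx (grd \<omega>) (gsd \<omega>) < r}) =
      (\<omega> \<in> {\<omega>\<in>space M. grd \<omega> < (c * Ps) * gsd \<omega> + c})"
    by eventually_elim (simp add: R_rd_less_iff[OF assms(1) Ps_pos assms(2-4)] c_def algebra_simps)
  show "{\<omega>\<in>space M. R_rd Ps Pr Cx (grd \<omega>) (gsd \<omega>) < r} \<in> sets M"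
    unfolding R_rd_def by measurable
  show "{\<omega>\<in>space M. grd \<omega> < (c * Ps) * gsd \<omega> + c} \<in> sets M"
    by measurable
qed

lemma P_rd_closed_form:
  assumes "0 < r" "0 < Pr" "0 \<le> Cx" "Cx < 1"
  shows "P_rd M grd gsd Ps Pr Cx r =
    1 - exp (- (Psi r Cx / (Pr * pi_rd * (1 - Cx\<^sup>2))))
      / (Ps * pi_sd * (Psi r Cx / (Pr * pi_rd * (1 - Cx\<^sup>2))) + 1)"
proof -
  define c where "c = outage_threshold r Pr Cx"
  have "0 \<le> c"
    using outage_threshold_nonneg[OF assms] by (simp add: c_def)
  have "P_rd M grd gsd Ps Pr Cx r = 1 - exp (- (1 / pi_rd) * c) * (1 / pi_sd) / (1 / pi_sd + 1 / pi_rd * (c * Ps))"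
    unfolding P_rd_eq_prob_less_affine[OF assms] c_def[symmetric]
    by (rule prob_exponential_less_affine_exponential[OF _ _ _ _ grd_exponential gsd_exponential indep])
       (use \<open>0 \<le> c\<close> Ps_pos pi_rd_pos pi_sd_pos in simp_all)
  also have "\<dots> = 1 - exp (- (c / pi_rd)) / (Ps * pi_sd * (c / pi_rd) + 1)"
    using \<open>0 \<le> c\<close> Ps_pos pi_rd_pos pi_sd_pos by (simp add: field_simps add_pos_nonneg)
  also have "c / pi_rd = Psi r Cx / (Pr * pi_rd * (1 - Cx\<^sup>2))"
    by (simp add: c_def outage_threshold_def)
  finally show ?thesis .
qed

lemma P_rd_at_0:
  assumes "0 < r" "0 < Pr"
  shows "P_rd M grd gsd Ps Pr 0 r =
    1 - Pr * pi_rd * exp (- eta r / (Pr * pi_rd)) / (Pr * pi_rd + Ps * pi_sd * eta r)"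
  using P_rd_closed_form[OF assms, of 0] eta_nonneg[of r] assms Ps_pos pi_rd_pos pi_sd_pos
  by (simp add: Psi_0 field_simps add_pos_nonneg)

lemma P_rd_tendsto_at_left_1:
  assumes "0 < r" "0 < Pr"
  shows "((\<lambda>Cx. P_rd M grd gsd Ps Pr Cx r) \<longlongrightarrow>
    1 - exp (- gam r / (2 * Pr * pi_rd)) / (gam r * Ps * pi_sd / (2 * Pr * pi_rd) + 1)) (at_left 1)"
proof -
  define F where "F t = 1 - exp (- (t / (Pr * pi_rd))) / (Ps * pi_sd * (t / (Pr * pi_rd)) + 1)" for t
  define T where "T x = gam r / (sqrt (1 + gam r * (1 - x\<^sup>2)) + 1)" for x
  have "\<forall>\<^sub>F x in at_left 1. x \<in> {0<..<1::real}"
    by (rule eventually_at_left_real) simp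
  then have "\<forall>\<^sub>F x in at_left 1. F (T x) = P_rd M grd gsd Ps Pr x r"
  proof eventually_elim
    case (elim x)
    then have "P_rd M grd gsd Ps Pr x r = F (Psi r x / (1 - x\<^sup>2))"
      by (simp add: P_rd_closed_form[OF assms] F_def ac_simps)
    also have "\<dots> = F (T x)"
      using elim by (simp add: Psi_div_eq[OF \<open>0 < r\<close>] T_def)
    finally show ?case ..
  qed
  moreover have "((\<lambda>x. F (T x)) \<longlongrightarrow> F (T 1)) (at_left 1)"
  proof -
    have "0 < Ps * pi_sd * (T 1 / (Pr * pi_rd)) + 1"
      using gam_pos[OF \<open>0 < r\<close>] \<open>0 < Pr\<close> Ps_pos pi_rd_pos pi_sd_pos by (simp add: T_def add_pos_pos)
    then show ?thesis
      unfolding F_def T_def using \<open>0 < Pr\<close> pi_rd_pos by (intro tendsto_intros) auto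
  qed
  moreover have "F (T 1) = 1 - exp (- gam r / (2 * Pr * pi_rd)) / (gam r * Ps * pi_sd / (2 * Pr * pi_rd) + 1)"
    by (simp add: F_def T_def field_simps)
  ultimately show ?thesis
    using tendsto_cong by fastforce
qed

end

theorem corollary1:
  fixes M :: "'a measure" and grd gsd :: "'a \<Rightarrow> real"
    and Ps pi_rd pi_sd :: real
  assumes "prob_space M"
    and "Ps > 0" and "pi_rd > 0" and "pi_sd > 0"
    and "distributed M lborel grd (\<lambda>x. ennreal (exponential_density (1 / pi_rd) x))"
    and "distributed M lborel gsd (\<lambda>x. ennreal (exponential_density (1 / pi_sd) x))"
    and "prob_space.indep_var M borel grd borel gsd"
  shows "\<forall>r > 0. \<forall>Pr > 0.
     (\<forall>Cx \<in> {0..<1}.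
        P_rd M grd gsd Ps Pr Cx r =
          1 - exp (- (Psi r Cx / (Pr * pi_rd * (1 - Cx^2))))
              / (Ps * pi_sd * (Psi r Cx / (Pr * pi_rd * (1 - Cx^2))) + 1))
   \<and> P_rd M grd gsd Ps Pr 0 r =
       1 - Pr * pi_rd * exp (- eta r / (Pr * pi_rd)) / (Pr * pi_rd + Ps * pi_sd * eta r)
   \<and> ((\<lambda>Cx. P_rd M grd gsd Ps Pr Cx r) \<longlongrightarrow>
       1 - exp (- gam r / (2 * Pr * pi_rd)) / (gam r * Ps * pi_sd / (2 * Pr * pi_rd) + 1))
      (at_left 1)"
proof -
  interpret rayleigh_fading M grd gsd Ps pi_rd pi_sd
    using assms by (simp add: rayleigh_fading_def rayleigh_fading_axioms_def)
  show ?thesis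
    using P_rd_closed_form P_rd_at_0 P_rd_tendsto_at_left_1 by simp
qed

end
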